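(* Let $G=K_{r_1,\dots,r_k}$ with partition sets $X_1,\dots,X_k$ ($|X_i|=r_i$), and assume $|V(G)|$ is odd. Let $\mathcal X=\{X_1,\dots,X_k\}$. Then $G$ has a good bisection if and only if $\mathcal X$ has a good subset.
   Context: A bisection of a graph $G$ is a bipartite spanning subgraph $H$ of $G$ with partition sets $V_1,V_2$ (every edge of $H$ joins $V_1$ and $V_2$) with $||V_1|-|V_2||\le 1$. It is good if $2d_H(v)\ge d_G(v)-1$ for every $v\in V(G)$. Let $\mathcal S_1=\{X_i: |X_i| \text{ odd}\}$ and $\mathcal S_0=\{X_i:|X_i|\text{ even}\}$. For $\mathcal A\subseteq\mathcal X$ let $s(\mathcal A)=\sum_{X_i\in\mathcal A}|X_i|$. A subset $\mathcal A\subseteq\mathcal X$ is good if there exist $\mathcal A'\subseteq\mathcal A$ and an integer $n$ with $0\le n\le|\mathcal S_0\setminus\mathcal A|$ such that $s(\mathcal A')=s(\mathcal A)/2+(m+2n-1)/2$, where $m=|\mathcal S_1\setminus\mathcal A|$. *)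

theory Defs
  imports Main "HOL-Library.Disjoint_Sets"
begin

text \<open>Graphs: a finite vertex set V with a symmetric irreflexive adjacency relation E.\<close>

definition degree :: "'a set \<Rightarrow> ('a \<Rightarrow> 'a \<Rightarrow> bool) \<Rightarrow> 'a \<Rightarrow> nat" where
  "degree V E v = card {u \<in> V. E v u}"

definition is_bisection ::
  "'a set \<Rightarrow> ('a \<Rightarrow> 'a \<Rightarrow> bool) \<Rightarrow> 'a set \<Rightarrow> 'a set \<Rightarrow> ('a \<Rightarrow> 'a \<Rightarrow> bool) \<Rightarrow> bool" where
  "is_bisection V E V1 V2 F \<longleftrightarrow>
     (\<forall>u v. F u v \<longrightarrow> u \<in> V \<and> v \<in> V \<and> E u v) \<and>
     (\<forall>u v. F u v \<longrightarrow> F v u) \<and>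
     V1 \<union> V2 = V \<and> V1 \<inter> V2 = {} \<and>
     (\<forall>u v. F u v \<longrightarrow> (u \<in> V1 \<and> v \<in> V2) \<or> (u \<in> V2 \<and> v \<in> V1)) \<and>
     \<bar>int (card V1) - int (card V2)\<bar> \<le> 1"

definition is_good_bisection ::
  "'a set \<Rightarrow> ('a \<Rightarrow> 'a \<Rightarrow> bool) \<Rightarrow> 'a set \<Rightarrow> 'a set \<Rightarrow> ('a \<Rightarrow> 'a \<Rightarrow> bool) \<Rightarrow> bool" where
  "is_good_bisection V E V1 V2 F \<longleftrightarrow>
     is_bisection V E V1 V2 F \<and>
     (\<forall>v\<in>V. 2 * int (degree V F v) \<ge> int (degree V E v) - 1)"

definition has_good_bisection :: "'a set \<Rightarrow> ('a \<Rightarrow> 'a \<Rightarrow> bool) \<Rightarrow> bool" where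
  "has_good_bisection V E \<longleftrightarrow> (\<exists>V1 V2 F. is_good_bisection V E V1 V2 F)"

definition kmp_vertices :: "nat \<Rightarrow> (nat \<Rightarrow> nat) \<Rightarrow> (nat \<times> nat) set" where
  "kmp_vertices k r = {(i, j). i < k \<and> j < r i}"

definition kmp_part :: "(nat \<Rightarrow> nat) \<Rightarrow> nat \<Rightarrow> (nat \<times> nat) set" where
  "kmp_part r i = {(i', j). i' = i \<and> j < r i}"

definition kmp_adj :: "nat \<times> nat \<Rightarrow> nat \<times> nat \<Rightarrow> bool" where
  "kmp_adj u v \<longleftrightarrow> fst u \<noteq> fst v"

text \<open>Subsets of the family of parts are represented by index sets A \<subseteq> {..<k};
  s(A) = sum of the part sizes.\<close>
definition part_size_sum :: "(nat \<Rightarrow> nat) \<Rightarrow> nat set \<Rightarrow> nat" where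
  "part_size_sum r A = (\<Sum>i\<in>A. card (kmp_part r i))"

definition S1_idx :: "nat \<Rightarrow> (nat \<Rightarrow> nat) \<Rightarrow> nat set" where
  "S1_idx k r = {i. i < k \<and> odd (card (kmp_part r i))}"

definition S0_idx :: "nat \<Rightarrow> (nat \<Rightarrow> nat) \<Rightarrow> nat set" where
  "S0_idx k r = {i. i < k \<and> even (card (kmp_part r i))}"

definition good_subset :: "nat \<Rightarrow> (nat \<Rightarrow> nat) \<Rightarrow> nat set \<Rightarrow> bool" where
  "good_subset k r A \<longleftrightarrow> A \<subseteq> {..<k} \<and>
     (let m = card (S1_idx k r - A) in
      \<exists>A' \<subseteq> A. \<exists>n::int. 0 \<le> n \<and> n \<le> int (card (S0_idx k r - A)) \<and>
        2 * int (part_size_sum r A') = int (part_size_sum r A) + int m + 2 * n - 1)"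

definition has_good_subset :: "nat \<Rightarrow> (nat \<Rightarrow> nat) \<Rightarrow> bool" where
  "has_good_subset k r \<longleftrightarrow> (\<exists>A. good_subset k r A)"

end

theory Submission
  imports Defs
begin

text \<open>Since every edge of \<open>G\<close> across a partition \<open>V\<^sub>1, V\<^sub>2\<close> may be kept, a good bisection
  exists iff some balanced partition satisfies the degree condition for the full cut. For
  \<open>|V(G)| = 2s + 1\<close> let the smaller side contain \<open>u\<^sub>i\<close> vertices of \<open>X\<^sub>i\<close>; the condition reads
  \<open>r\<^sub>i \<le> 2u\<^sub>i + 2\<close> at a vertex of \<open>X\<^sub>i\<close> on the smaller side and \<open>2u\<^sub>i \<le> r\<^sub>i\<close> on the larger one.
  So each part lies wholly on one side or has \<open>r\<^sub>i - 2u\<^sub>i \<in> {0, 1, 2}\<close>, the value being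
  \<open>1\<close> exactly for odd parts. The parts lying wholly on one side form \<open>\<A>\<close>, those on the
  smaller side \<open>\<A>'\<close>, and \<open>n\<close> counts the split parts with \<open>r\<^sub>i - 2u\<^sub>i = 2\<close>; then
  \<open>\<Sum>u\<^sub>i = s\<close> becomes exactly the equation defining a good subset.\<close>

definition good_partition :: "'a set \<Rightarrow> ('a \<Rightarrow> 'a \<Rightarrow> bool) \<Rightarrow> 'a set \<Rightarrow> 'a set \<Rightarrow> bool" where
  "good_partition V E V1 V2 \<longleftrightarrow> V1 \<union> V2 = V \<and> V1 \<inter> V2 = {} \<and>
     \<bar>int (card V1) - int (card V2)\<bar> \<le> 1 \<and>
     (\<forall>v\<in>V1. int (degree V E v) - 1 \<le> 2 * int (card {x\<in>V2. E v x})) \<and>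
     (\<forall>v\<in>V2. int (degree V E v) - 1 \<le> 2 * int (card {x\<in>V1. E v x}))"

lemma good_partition_commute:
  "good_partition V E V1 V2 \<Longrightarrow> good_partition V E V2 V1"
  unfolding good_partition_def by (auto simp: abs_minus_commute)

lemma degree_bisection_le:
  assumes "is_bisection V E V1 V2 F" "finite V" "v \<in> V1"
  shows "degree V F v \<le> card {x\<in>V2. E v x}"
proof -
  have "{x\<in>V. F v x} \<subseteq> {x\<in>V2. E v x}"
    using assms(1,3) unfolding is_bisection_def by blast
  moreover have "finite V2" using assms(1,2) unfolding is_bisection_def by auto
  ultimately show ?thesis unfolding degree_def by (intro card_mono) auto
qed

lemma good_bisection_imp_good_partition:
  assumes good: "is_good_bisection V E V1 V2 F" and "finite V"
  shows "good_partition V E V1 V2"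
proof -
  have bis: "is_bisection V E V1 V2 F" using good unfolding is_good_bisection_def by blast
  then have bis': "is_bisection V E V2 V1 F" unfolding is_bisection_def
    by (auto simp: abs_minus_commute)
  have deg: "int (degree V E v) - 1 \<le> 2 * int (degree V F v)" if "v \<in> V" for v
    using good that unfolding is_good_bisection_def by blast
  have part: "V1 \<union> V2 = V" "V1 \<inter> V2 = {}" "\<bar>int (card V1) - int (card V2)\<bar> \<le> 1"
    using bis unfolding is_bisection_def by auto
  have "int (degree V E v) - 1 \<le> 2 * int (card {x\<in>V2. E v x})" if "v \<in> V1" for v
    using deg[of v] degree_bisection_le[OF bis \<open>finite V\<close> that] part(1) that by auto
  moreover have "int (degree V E v) - 1 \<le> 2 * int (card {x\<in>V1. E v x})" if "v \<in> V2" for v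
    using deg[of v] degree_bisection_le[OF bis' \<open>finite V\<close> that] part(1) that by auto
  ultimately show ?thesis using part unfolding good_partition_def by blast
qed

definition cut_rel :: "('a \<Rightarrow> 'a \<Rightarrow> bool) \<Rightarrow> 'a set \<Rightarrow> 'a set \<Rightarrow> 'a \<Rightarrow> 'a \<Rightarrow> bool" where
  "cut_rel E V1 V2 x y \<longleftrightarrow> E x y \<and> (x \<in> V1 \<and> y \<in> V2 \<or> x \<in> V2 \<and> y \<in> V1)"

lemma degree_cut_rel:
  assumes "V1 \<union> V2 = V" "V1 \<inter> V2 = {}" "v \<in> V1"
  shows "degree V (cut_rel E V1 V2) v = card {x\<in>V2. E v x}"
proof -
  have "{x\<in>V. cut_rel E V1 V2 v x} = {x\<in>V2. E v x}"
    using assms unfolding cut_rel_def by auto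
  then show ?thesis unfolding degree_def by simp
qed

lemma good_partition_imp_good_bisection:
  assumes "good_partition V E V1 V2" "symp E"
  shows "is_good_bisection V E V1 V2 (cut_rel E V1 V2)"
proof -
  have part: "V1 \<union> V2 = V" "V1 \<inter> V2 = {}" "V2 \<union> V1 = V" "V2 \<inter> V1 = {}"
    using assms(1) unfolding good_partition_def by auto
  have "cut_rel E V1 V2 = cut_rel E V2 V1" unfolding cut_rel_def by (intro ext) auto
  then have "int (degree V E v) - 1 \<le> 2 * int (degree V (cut_rel E V1 V2) v)" if "v \<in> V" for v
    using that assms(1) degree_cut_rel[OF part(1,2)] degree_cut_rel[OF part(3,4)] part
    unfolding good_partition_def by (metis Un_iff)
  moreover have "is_bisection V E V1 V2 (cut_rel E V1 V2)"
    using assms unfolding is_bisection_def good_partition_def cut_rel_def by (blast dest: sympD)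
  ultimately show ?thesis unfolding is_good_bisection_def by auto
qed

lemma has_good_bisection_iff_good_partition:
  assumes "finite V" "symp E"
  shows "has_good_bisection V E \<longleftrightarrow> (\<exists>V1 V2. good_partition V E V1 V2)"
  unfolding has_good_bisection_def
  by (meson good_bisection_imp_good_partition good_partition_imp_good_bisection assms)

lemma kmp_part_eq: "kmp_part r i = Pair i ` {..<r i}"
  unfolding kmp_part_def by auto

lemma card_kmp_part [simp]: "card (kmp_part r i) = r i"
  unfolding kmp_part_eq by (simp add: card_image inj_on_def)

lemma finite_kmp_part [simp]: "finite (kmp_part r i)"
  unfolding kmp_part_eq by simp

lemma fst_kmp_part: "v \<in> kmp_part r i \<Longrightarrow> fst v = i"
  unfolding kmp_part_def by auto

lemma kmp_vertices_eq: "kmp_vertices k r = (\<Union>i<k. kmp_part r i)"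
  unfolding kmp_vertices_def kmp_part_def by auto

lemma finite_kmp_vertices [simp]: "finite (kmp_vertices k r)"
  unfolding kmp_vertices_eq by simp

lemma kmp_part_subset: "i < k \<Longrightarrow> kmp_part r i \<subseteq> kmp_vertices k r"
  unfolding kmp_vertices_eq by auto

lemma card_kmp_subset:
  assumes "S \<subseteq> kmp_vertices k r"
  shows "card S = (\<Sum>i<k. card (S \<inter> kmp_part r i))"
proof -
  have "S = (\<Union>i<k. S \<inter> kmp_part r i)" using assms unfolding kmp_vertices_eq by auto
  also have "card \<dots> = (\<Sum>i<k. card (S \<inter> kmp_part r i))"
    by (rule card_UN_disjoint) (auto simp: kmp_part_def)
  finally show ?thesis .
qed

lemma card_kmp_vertices: "card (kmp_vertices k r) = (\<Sum>i<k. r i)"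
  using card_kmp_subset[of "kmp_vertices k r" k r] kmp_part_subset
  by (simp add: Int_absorb1)

lemma kmp_part_le_card: "i < k \<Longrightarrow> r i \<le> card (kmp_vertices k r)"
  using card_mono[OF finite_kmp_vertices kmp_part_subset] by fastforce

lemma kmp_vertex_in_part: "v \<in> kmp_vertices k r \<Longrightarrow> fst v < k \<and> v \<in> kmp_part r (fst v)"
  unfolding kmp_vertices_def kmp_part_def by auto

lemma card_kmp_adj:
  assumes "S \<subseteq> kmp_vertices k r"
  shows "card {x\<in>S. kmp_adj v x} = card S - card (S \<inter> kmp_part r (fst v))"
proof -
  have "{x\<in>S. kmp_adj v x} = S - kmp_part r (fst v)"
    using assms unfolding kmp_adj_def kmp_vertices_def kmp_part_def by auto
  moreover have "finite S" using assms finite_kmp_vertices by (rule finite_subset)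
  ultimately show ?thesis by (simp add: card_Diff_subset_Int)
qed

lemma degree_kmp_adj:
  "v \<in> kmp_vertices k r \<Longrightarrow> degree (kmp_vertices k r) kmp_adj v = card (kmp_vertices k r) - r (fst v)"
proof -
  assume "v \<in> kmp_vertices k r"
  then have "kmp_vertices k r \<inter> kmp_part r (fst v) = kmp_part r (fst v)"
    using kmp_vertex_in_part kmp_part_subset by blast
  then show ?thesis unfolding degree_def using card_kmp_adj[OF subset_refl] by simp
qed

lemma ball_kmp_subset:
  assumes "S \<subseteq> kmp_vertices k r"
  shows "(\<forall>v\<in>S. P (fst v)) \<longleftrightarrow> (\<forall>i<k. 0 < card (S \<inter> kmp_part r i) \<longrightarrow> P i)"
proof -
  have "(\<exists>v\<in>S. fst v = i) \<longleftrightarrow> 0 < card (S \<inter> kmp_part r i)" if "i < k" for i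
    using assms kmp_vertex_in_part fst_kmp_part by (fastforce simp: card_gt_0_iff)
  moreover have "fst v < k" if "v \<in> S" for v using assms that kmp_vertex_in_part by blast
  ultimately show ?thesis by metis
qed

text \<open>Here \<open>u i\<close> is the number of vertices of the part \<open>X\<^sub>i\<close> on the smaller side of a bisection.\<close>

definition good_split :: "nat \<Rightarrow> (nat \<Rightarrow> nat) \<Rightarrow> (nat \<Rightarrow> nat) \<Rightarrow> bool" where
  "good_split k r u \<longleftrightarrow> 2 * (\<Sum>i<k. u i) + 1 = (\<Sum>i<k. r i) \<and>
     (\<forall>i<k. u i = 0 \<or> u i = r i \<or> (2 * u i \<le> r i \<and> r i \<le> 2 * u i + 2))"

lemma good_split_part_iff:
  fixes u r :: nat
  assumes "u \<le> r"
  shows "(u = 0 \<or> u = r \<or> (2 * u \<le> r \<and> r \<le> 2 * u + 2)) \<longleftrightarrow>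
    (0 < u \<longrightarrow> r \<le> 2 * u + 2) \<and> (u < r \<longrightarrow> 2 * u \<le> r)"
  using assms by linarith

lemma card_kmp_part_split:
  assumes "V1 \<union> V2 = kmp_vertices k r" "V1 \<inter> V2 = {}" "i < k"
  shows "card (V1 \<inter> kmp_part r i) + card (V2 \<inter> kmp_part r i) = r i"
proof -
  have "kmp_part r i = (V1 \<inter> kmp_part r i) \<union> (V2 \<inter> kmp_part r i)"
    using assms(1) kmp_part_subset[OF assms(3)] by auto
  moreover have "(V1 \<inter> kmp_part r i) \<inter> (V2 \<inter> kmp_part r i) = {}" using assms(2) by auto
  ultimately show ?thesis by (metis card_Un_disjoint card_kmp_part finite_Int finite_kmp_part)
qed

context
  fixes k r V1 V2
  assumes part: "V1 \<union> V2 = kmp_vertices k r" "V1 \<inter> V2 = {}"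
    and card_V2: "card V2 = card V1 + 1"
begin

private lemma card_kmp_vertices_split: "card (kmp_vertices k r) = card V1 + card V2"
proof -
  have "finite V1" "finite V2" using part(1) finite_kmp_vertices by (metis finite_Un)+
  then show ?thesis using card_Un_disjoint part by metis
qed

lemma kmp_smaller_side_condition_iff:
  assumes "v \<in> V1"
  shows "int (degree (kmp_vertices k r) kmp_adj v) - 1 \<le> 2 * int (card {x\<in>V2. kmp_adj v x})
    \<longleftrightarrow> r (fst v) \<le> 2 * card (V1 \<inter> kmp_part r (fst v)) + 2"
proof -
  have sub: "V2 \<subseteq> kmp_vertices k r" using part by auto
  have i: "fst v < k" using assms part kmp_vertex_in_part by blast
  have "card (V2 \<inter> kmp_part r (fst v)) \<le> card V2"
    using finite_subset[OF sub finite_kmp_vertices] by (simp add: card_mono)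
  moreover have "degree (kmp_vertices k r) kmp_adj v = card (kmp_vertices k r) - r (fst v)"
    using assms part degree_kmp_adj by blast
  ultimately show ?thesis
    using card_kmp_adj[OF sub] kmp_part_le_card[OF i] card_kmp_part_split[OF part i]
      card_kmp_vertices_split card_V2
    by simp linarith
qed

lemma kmp_larger_side_condition_iff:
  assumes "v \<in> V2"
  shows "int (degree (kmp_vertices k r) kmp_adj v) - 1 \<le> 2 * int (card {x\<in>V1. kmp_adj v x})
    \<longleftrightarrow> 2 * card (V1 \<inter> kmp_part r (fst v)) \<le> r (fst v)"
proof -
  have sub: "V1 \<subseteq> kmp_vertices k r" using part by auto
  have i: "fst v < k" using assms part kmp_vertex_in_part by blast
  have "card (V1 \<inter> kmp_part r (fst v)) \<le> card V1"
    using finite_subset[OF sub finite_kmp_vertices] by (simp add: card_mono)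
  moreover have "degree (kmp_vertices k r) kmp_adj v = card (kmp_vertices k r) - r (fst v)"
    using assms part degree_kmp_adj by blast
  ultimately show ?thesis
    using card_kmp_adj[OF sub] kmp_part_le_card[OF i] card_kmp_part_split[OF part i]
      card_kmp_vertices_split card_V2
    by simp linarith
qed

lemma kmp_good_partition_iff_good_split:
  "good_partition (kmp_vertices k r) kmp_adj V1 V2 \<longleftrightarrow>
    good_split k r (\<lambda>i. card (V1 \<inter> kmp_part r i))"
proof -
  define u where "u i = card (V1 \<inter> kmp_part r i)" for i
  have sub: "V1 \<subseteq> kmp_vertices k r" "V2 \<subseteq> kmp_vertices k r" using part by auto
  have split: "u i + card (V2 \<inter> kmp_part r i) = r i" if "i < k" for i
    using card_kmp_part_split[OF part that] unfolding u_def .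
  have "2 * (\<Sum>i<k. u i) + 1 = (\<Sum>i<k. r i)"
    using card_kmp_subset[OF sub(1)] card_kmp_vertices[of k r] card_kmp_vertices_split card_V2
    unfolding u_def by simp
  moreover have "(\<forall>v\<in>V1. int (degree (kmp_vertices k r) kmp_adj v) - 1
      \<le> 2 * int (card {x\<in>V2. kmp_adj v x})) \<longleftrightarrow> (\<forall>i<k. 0 < u i \<longrightarrow> r i \<le> 2 * u i + 2)"
  proof -
    have "(\<forall>v\<in>V1. int (degree (kmp_vertices k r) kmp_adj v) - 1
        \<le> 2 * int (card {x\<in>V2. kmp_adj v x})) \<longleftrightarrow> (\<forall>v\<in>V1. r (fst v) \<le> 2 * u (fst v) + 2)"
      using kmp_smaller_side_condition_iff unfolding u_def by auto
    also have "\<dots> \<longleftrightarrow> (\<forall>i<k. 0 < u i \<longrightarrow> r i \<le> 2 * u i + 2)"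
      using ball_kmp_subset[OF sub(1)] unfolding u_def .
    finally show ?thesis .
  qed
  moreover have "(\<forall>v\<in>V2. int (degree (kmp_vertices k r) kmp_adj v) - 1
      \<le> 2 * int (card {x\<in>V1. kmp_adj v x})) \<longleftrightarrow> (\<forall>i<k. u i < r i \<longrightarrow> 2 * u i \<le> r i)"
  proof -
    have "(\<forall>v\<in>V2. int (degree (kmp_vertices k r) kmp_adj v) - 1
        \<le> 2 * int (card {x\<in>V1. kmp_adj v x})) \<longleftrightarrow> (\<forall>v\<in>V2. 2 * u (fst v) \<le> r (fst v))"
      using kmp_larger_side_condition_iff unfolding u_def by auto
    also have "\<dots> \<longleftrightarrow> (\<forall>i<k. 0 < card (V2 \<inter> kmp_part r i) \<longrightarrow> 2 * u i \<le> r i)"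
      by (rule ball_kmp_subset[OF sub(2)])
    also have "\<dots> \<longleftrightarrow> (\<forall>i<k. u i < r i \<longrightarrow> 2 * u i \<le> r i)"
      using split by (metis add_cancel_right_right gr0I less_add_same_cancel1)
    finally show ?thesis .
  qed
  moreover have "(\<forall>i<k. u i = 0 \<or> u i = r i \<or> (2 * u i \<le> r i \<and> r i \<le> 2 * u i + 2)) \<longleftrightarrow>
      (\<forall>i<k. 0 < u i \<longrightarrow> r i \<le> 2 * u i + 2) \<and> (\<forall>i<k. u i < r i \<longrightarrow> 2 * u i \<le> r i)"
    using good_split_part_iff split by (metis le_add1)
  ultimately show ?thesis
    using part card_V2 unfolding good_partition_def good_split_def u_def by simp
qed

end

lemma symp_kmp_adj: "symp kmp_adj"
  unfolding kmp_adj_def by (auto intro: sympI)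

lemma good_split_imp_le: "good_split k r u \<Longrightarrow> i < k \<Longrightarrow> u i \<le> r i"
  unfolding good_split_def by fastforce

lemma kmp_has_good_bisection_iff_good_split:
  assumes odd: "odd (card (kmp_vertices k r))"
  shows "has_good_bisection (kmp_vertices k r) kmp_adj \<longleftrightarrow> (\<exists>u. good_split k r u)"
proof
  let ?V = "kmp_vertices k r"
  assume "has_good_bisection ?V kmp_adj"
  then obtain V1 V2 where good: "good_partition ?V kmp_adj V1 V2"
    using has_good_bisection_iff_good_partition[OF finite_kmp_vertices symp_kmp_adj] by blast
  then have part: "V1 \<union> V2 = ?V" "V1 \<inter> V2 = {}"
    and balanced: "\<bar>int (card V1) - int (card V2)\<bar> \<le> 1"
    unfolding good_partition_def by auto
  have fin: "finite V1" "finite V2" using part(1) finite_kmp_vertices by (metis finite_Un)+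
  have "card ?V = card V1 + card V2" using card_Un_disjoint[OF fin part(2)] part(1) by simp
  then have "card V1 \<noteq> card V2" using odd by auto
  then consider "card V2 = card V1 + 1" | "card V1 = card V2 + 1" using balanced by linarith
  then show "\<exists>u. good_split k r u"
  proof cases
    case 1
    then show ?thesis using kmp_good_partition_iff_good_split[OF part] good by blast
  next
    case 2
    have "V2 \<union> V1 = ?V" "V2 \<inter> V1 = {}" using part by auto
    then show ?thesis
      using kmp_good_partition_iff_good_split 2 good_partition_commute[OF good] by blast
  qed
next
  let ?V = "kmp_vertices k r"
  assume "\<exists>u. good_split k r u"
  then obtain u where u: "good_split k r u" ..
  define V1 where "V1 = {x\<in>?V. snd x < u (fst x)}"
  define V2 where "V2 = ?V - V1"
  have sub: "V1 \<subseteq> ?V" unfolding V1_def by auto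
  have card_part: "card (V1 \<inter> kmp_part r i) = u i" if "i < k" for i
  proof -
    have "V1 \<inter> kmp_part r i = Pair i ` {..<u i}"
      using good_split_imp_le[OF u that] that
      unfolding V1_def kmp_vertices_def kmp_part_def by fastforce
    then show ?thesis by (simp add: card_image inj_on_def)
  qed
  have "card V1 = (\<Sum>i<k. u i)" using card_kmp_subset[OF sub] card_part by simp
  moreover have "2 * (\<Sum>i<k. u i) + 1 = (\<Sum>i<k. r i)" using u unfolding good_split_def ..
  ultimately have "card V2 = card V1 + 1"
    using card_kmp_vertices[of k r] sub finite_subset[OF sub finite_kmp_vertices]
    unfolding V2_def by (simp add: card_Diff_subset)
  moreover have "good_split k r (\<lambda>i. card (V1 \<inter> kmp_part r i))"
    using u card_part unfolding good_split_def by simp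
  ultimately have "good_partition ?V kmp_adj V1 V2"
    using kmp_good_partition_iff_good_split[of V1 "?V - V1"] sub unfolding V2_def by auto
  then show "has_good_bisection ?V kmp_adj"
    using has_good_bisection_iff_good_partition[OF finite_kmp_vertices symp_kmp_adj] by blast
qed

lemma sum_parity_decomposition:
  fixes r u :: "nat \<Rightarrow> nat"
  assumes "finite N" "B \<subseteq> N"
    and "\<forall>i\<in>N. r i = 2 * u i + (if odd (r i) then 1 else 0) + (if i \<in> B then 2 else 0)"
  shows "(\<Sum>i\<in>N. r i) = 2 * (\<Sum>i\<in>N. u i) + card {i\<in>N. odd (r i)} + 2 * card B"
proof -
  have "(\<Sum>i\<in>N. r i)
      = (\<Sum>i\<in>N. 2 * u i + (if odd (r i) then 1 else 0) + (if i \<in> B then 2 else 0))"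
    using assms(3) by (intro sum.cong) auto
  also have "\<dots> = 2 * (\<Sum>i\<in>N. u i) + card {i\<in>N. odd (r i)} + 2 * card (N \<inter> B)"
    using assms(1) by (simp add: sum.distrib sum_distrib_left flip: sum.inter_filter)
      (simp add: Int_def conj_commute)
  finally show ?thesis using assms(2) by (simp add: Int_absorb1)
qed

lemma sum_split_iff_good_subset_equation:
  fixes u :: "nat \<Rightarrow> nat"
  assumes A: "A \<subseteq> {..<k}" "A' \<subseteq> A" and B: "B \<subseteq> {..<k} - A"
    and on_A': "\<forall>i\<in>A'. u i = r i" and on_A: "\<forall>i\<in>A - A'. u i = 0"
    and off_A: "\<forall>i\<in>{..<k} - A.
      r i = 2 * u i + (if odd (r i) then 1 else 0) + (if i \<in> B then 2 else 0)"
  shows "2 * (\<Sum>i<k. u i) + 1 = (\<Sum>i<k. r i) \<longleftrightarrow>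
    2 * int (part_size_sum r A') =
      int (part_size_sum r A) + int (card (S1_idx k r - A)) + 2 * int (card B) - 1"
proof -
  define N where "N = {..<k} - A"
  have fin: "finite A" "finite A'" "finite N"
    using A finite_subset[OF _ finite_lessThan] finite_subset unfolding N_def by blast+
  have split: "{..<k} = A \<union> N" "A \<inter> N = {}" using A unfolding N_def by auto
  have "(\<Sum>i\<in>A. u i) = (\<Sum>i\<in>A'. u i)"
    using on_A fin A by (intro sum.mono_neutral_right) auto
  also have "\<dots> = part_size_sum r A'"
    using on_A' unfolding part_size_sum_def by simp
  finally have sum_A: "(\<Sum>i\<in>A. u i) = part_size_sum r A'" .
  have "S1_idx k r - A = {i\<in>N. odd (r i)}" unfolding S1_idx_def N_def by auto
  then have sum_N: "(\<Sum>i\<in>N. r i) = 2 * (\<Sum>i\<in>N. u i) + card (S1_idx k r - A) + 2 * card B"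
    using sum_parity_decomposition[OF fin(3), of B r u] B off_A unfolding N_def by simp
  have "(\<Sum>i<k. u i) = part_size_sum r A' + (\<Sum>i\<in>N. u i)"
    "(\<Sum>i<k. r i) = part_size_sum r A + (\<Sum>i\<in>N. r i)"
    using sum_A unfolding split(1) part_size_sum_def
    by (simp_all add: sum.union_disjoint fin split(2))
  then show ?thesis using sum_N by linarith
qed

lemma good_split_imp_good_subset:
  assumes u: "good_split k r u"
  shows "has_good_subset k r"
proof -
  define A where "A = {i. i < k \<and> (u i = 0 \<or> u i = r i)}"
  define A' where "A' = {i. i < k \<and> u i = r i}"
  define B where "B = {i\<in>{..<k} - A. r i = 2 * u i + 2}"
  have A: "A \<subseteq> {..<k}" "A' \<subseteq> A" unfolding A_def A'_def by auto
  have B: "B \<subseteq> S0_idx k r - A" unfolding B_def S0_idx_def by auto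
  have off_A: "\<forall>i\<in>{..<k} - A.
      r i = 2 * u i + (if odd (r i) then 1 else 0) + (if i \<in> B then 2 else 0)"
  proof
    fix i assume i: "i \<in> {..<k} - A"
    then have "r i = 2 * u i \<or> r i = 2 * u i + 1 \<or> r i = 2 * u i + 2"
      using u unfolding good_split_def A_def by force
    then show "r i = 2 * u i + (if odd (r i) then 1 else 0) + (if i \<in> B then 2 else 0)"
      using i unfolding B_def by auto
  qed
  have "B \<subseteq> {..<k} - A" and "\<forall>i\<in>A'. u i = r i" and "\<forall>i\<in>A - A'. u i = 0"
    unfolding A_def A'_def B_def by auto
  moreover have "2 * (\<Sum>i<k. u i) + 1 = (\<Sum>i<k. r i)" using u unfolding good_split_def ..
  ultimately have eq: "2 * int (part_size_sum r A') =
      int (part_size_sum r A) + int (card (S1_idx k r - A)) + 2 * int (card B) - 1"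
    using sum_split_iff_good_subset_equation[OF A _ _ _ off_A] by blast
  moreover have "int (card B) \<le> int (card (S0_idx k r - A))"
    using B by (simp add: card_mono S0_idx_def)
  ultimately have "\<exists>n::int. 0 \<le> n \<and> n \<le> int (card (S0_idx k r - A)) \<and>
      2 * int (part_size_sum r A') = int (part_size_sum r A) + int (card (S1_idx k r - A)) + 2 * n - 1"
    by (intro exI[of _ "int (card B)"]) simp
  then have "good_subset k r A" using A unfolding good_subset_def Let_def by blast
  then show ?thesis unfolding has_good_subset_def by blast
qed

lemma good_subset_imp_good_split:
  assumes r_pos: "\<forall>i<k. 1 \<le> r i" and good: "good_subset k r A"
  shows "\<exists>u. good_split k r u"
proof -
  obtain A' n where A: "A \<subseteq> {..<k}" "A' \<subseteq> A"
    and n: "0 \<le> n" "n \<le> int (card (S0_idx k r - A))"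
    and eq: "2 * int (part_size_sum r A') =
      int (part_size_sum r A) + int (card (S1_idx k r - A)) + 2 * n - 1"
    using good unfolding good_subset_def Let_def by blast
  obtain B where B: "B \<subseteq> S0_idx k r - A" "card B = nat n"
    using obtain_subset_with_card_n[of "nat n" "S0_idx k r - A"] n(2) by (metis nat_le_iff)
  \<comment> \<open>Here \<open>r\<^sub>i \<ge> 1\<close> is needed: it makes \<open>u\<^sub>i = r\<^sub>i/2 - 1\<close> below a genuine natural number.\<close>
  have B_even: "i < k \<and> i \<notin> A \<and> even (r i) \<and> 2 \<le> r i" if "i \<in> B" for i
  proof -
    have "i < k" "i \<notin> A" "even (r i)" using B(1) that unfolding S0_idx_def by auto
    moreover from this have "r i \<noteq> 1" by auto
    ultimately show ?thesis using r_pos by force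
  qed
  define u where "u i = (if i \<in> A' then r i else if i \<in> A then 0
    else if i \<in> B then r i div 2 - 1 else r i div 2)" for i
  have off_A: "\<forall>i\<in>{..<k} - A.
      r i = 2 * u i + (if odd (r i) then 1 else 0) + (if i \<in> B then 2 else 0)"
  proof
    fix i assume "i \<in> {..<k} - A"
    then have "i \<notin> A'" "i \<notin> A" using A by auto
    then show "r i = 2 * u i + (if odd (r i) then 1 else 0) + (if i \<in> B then 2 else 0)"
      using B_even[of i] unfolding u_def by auto presburger+
  qed
  have "B \<subseteq> {..<k} - A" "\<forall>i\<in>A'. u i = r i" "\<forall>i\<in>A - A'. u i = 0"
    using B(1) unfolding u_def S0_idx_def by auto
  then have sum: "2 * (\<Sum>i<k. u i) + 1 = (\<Sum>i<k. r i)"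
    using sum_split_iff_good_subset_equation[OF A _ _ _ off_A] eq B(2) n(1) by simp
  have "u i = 0 \<or> u i = r i \<or> (2 * u i \<le> r i \<and> r i \<le> 2 * u i + 2)" if "i < k" for i
  proof (cases "i \<in> A")
    case True
    then show ?thesis unfolding u_def by auto
  next
    case False
    then have "r i = 2 * u i + (if odd (r i) then 1 else 0) + (if i \<in> B then 2 else 0)"
      using off_A that by blast
    then show ?thesis using B_even[of i] by (cases "i \<in> B"; cases "odd (r i)") auto
  qed
  then show ?thesis using sum unfolding good_split_def by blast
qed

lemma has_good_subset_iff_good_split:
  assumes "\<forall>i<k. 1 \<le> r i"
  shows "has_good_subset k r \<longleftrightarrow> (\<exists>u. good_split k r u)"
  using good_split_imp_good_subset good_subset_imp_good_split[OF assms]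
  unfolding has_good_subset_def by blast

theorem proposition3p3:
  fixes k :: nat and r :: "nat \<Rightarrow> nat"
  assumes "\<forall>i<k. r i \<ge> 1"
    and "odd (card (kmp_vertices k r))"
  shows "has_good_bisection (kmp_vertices k r) kmp_adj \<longleftrightarrow> has_good_subset k r"
  using kmp_has_good_bisection_iff_good_split[OF assms(2)] has_good_subset_iff_good_split[OF assms(1)]
  by simp

end
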